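(* Let $p$ be a prime and let $k,\ell,m,n$ be integers with $k>0$ and $\ell,m,n\ge 0$. Put $q=p^k$, $Q=p^{\ell}$, $R=p^m$, $S=p^n$. Let $c\in\mathbb{F}_q^*$ and define \[ f(X)=(X^q-X)^{Q+1}+c\,X^{q^2(R+S)}+c\,X^{q(R+S)}+c\,X^{R+S}\in\mathbb{F}_q[X], \] i.e. $f(X)=X^{Q+1}\circ(X^q-X)+(X^{q^2}+X^q+X)\circ cX^{R+S}$. Then $f(X)$ permutes $\mathbb{F}_{q^3}$ if and only if $\gcd\bigl(q-1,(Q+1)(R+S)\bigr)=1$. Equivalently, $f(X)$ permutes $\mathbb{F}_{q^3}$ if and only if $p=2$ and $\operatorname{ord}_2(k)\le\min\bigl(\operatorname{ord}_2(\ell),\operatorname{ord}_2(m-n)\bigr)$.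
   Context: A polynomial $g\in\mathbb{F}_{q^3}[X]$ permutes $\mathbb{F}_{q^3}$ if $\alpha\mapsto g(\alpha)$ is a bijection of $\mathbb{F}_{q^3}$. For a nonzero integer $N$, $\operatorname{ord}_2(N)$ is the largest integer $s\ge 0$ with $2^s\mid N$, and $\operatorname{ord}_2(0)=\infty$. The symbol $\circ$ denotes composition of polynomials. *)

theory Defs
  imports "HOL-Computational_Algebra.Computational_Algebra" "HOL-Library.Extended_Nat"
begin

definition ord2 :: "int \<Rightarrow> enat" where
  "ord2 N = (if N = 0 then \<infinity> else enat (multiplicity (2::int) N))"

definition f_poly :: "nat \<Rightarrow> nat \<Rightarrow> nat \<Rightarrow> nat \<Rightarrow> 'a::comm_ring_1 \<Rightarrow> 'a poly" where
  "f_poly q Q R S c =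
     (monom 1 q - monom 1 1) ^ (Q + 1)
     + monom c (q^2 * (R + S)) + monom c (q * (R + S)) + monom c (R + S)"

end

(*
  In odd characteristic f(1) = f(-1), while q - 1 and Q + 1 are both even.

  In characteristic 2 put Tr x = x^(q^2) + x^q + x and write R + S = 2^e (2^d + 1) with d = |m - n|,
  so that f(x) = (x^q + x)^(Q+1) + c Tr(x^(R+S)). Both arithmetic conditions say that there are no
  nontrivial (Q+1)-th or (2^d+1)-th roots of unity in F_q. Under them, f(x) = f(y) first forces
  u = x^q + x and v = y^q + y to coincide: both have trace 0 and u^(Q+1) + v^(Q+1) lies in F_q,
  and applying the Frobenius twice turns this into an identity showing that otherwise z^Q + z + 1
  would have a root in F_(q^3). Then a = x + y lies in F_q and the trace terms give
  (a + Tr x)^(R+S) = (Tr x)^(R+S), so a = 0. Conversely, a nontrivial (2^d+1)-th root of unity w in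
  F_q gives f(w) = f(1), and a nontrivial (Q+1)-th one gives f(w x + a) = f(x) for every x outside
  F_q and a suitable a in F_q.
*)
theory Submission
  imports Defs "HOL-Algebra.Algebraic_Closure_Type" "HOL-Number_Theory.Residues"
begin

(* HOL-Algebra's Divisibility.prime would otherwise shadow the prime of Factorial_Ring. *)
hide_const (open) Divisibility.prime

section \<open>Finite fields\<close>

lemma pow_ring_of_type_algebra:
  "x [^]\<^bsub>ring_of_type_algebra\<^esub> n = (x :: 'a :: field) ^ n"
  by (induction n) (simp_all add: ring_of_type_algebra_def)

lemma power_card_minus_one_eq_1:
  fixes x :: "'a :: {field, finite}"
  assumes "x \<noteq> 0"
  shows "x ^ (card (UNIV :: 'a set) - 1) = 1"
proof -
  let ?G = "Multiplicative_Group.mult_of (ring_of_type_algebra :: 'a ring)"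
  interpret group ?G
    using field.field_mult_group[OF field_from_type_algebra] .
  have "x [^]\<^bsub>?G\<^esub> order ?G = \<one>\<^bsub>?G\<^esub>"
    using assms by (intro pow_order_eq_1) (simp add: ring_of_type_algebra_def)
  moreover have "order ?G = card (UNIV :: 'a set) - 1"
    by (simp add: order_def ring_of_type_algebra_def card_Diff_singleton)
  ultimately show ?thesis
    by (simp add: Multiplicative_Group.nat_pow_mult_of pow_ring_of_type_algebra)
      (simp add: ring_of_type_algebra_def)
qed

lemma power_card_eq_self:
  fixes x :: "'a :: {field, finite}"
  shows "x ^ card (UNIV :: 'a set) = x"
proof (cases "x = 0")
  case False
  have "card (UNIV :: 'a set) = Suc (card (UNIV :: 'a set) - 1)"
    using finite_UNIV_card_ge_0[where 'a='a] by simp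
  then show ?thesis
    using power_card_minus_one_eq_1[OF False] by (metis mult_1_right power_Suc)
qed (use finite_UNIV_card_ge_0[where 'a='a] in simp)

lemma card_power_eq_power_le:
  fixes m n :: nat
  assumes "m < n"
  shows "card {x :: 'a :: idom. x ^ n = x ^ m} \<le> n"
proof -
  let ?p = "Polynomial.monom (1 :: 'a) n + - Polynomial.monom 1 m"
  have "Polynomial.degree ?p = n"
    using assms by (subst degree_add_eq_left) (simp_all add: degree_monom_eq)
  then have "?p \<noteq> 0"
    using assms by auto
  then show ?thesis
    using card_poly_roots_bound[of ?p] \<open>Polynomial.degree ?p = n\<close> by (simp add: poly_monom)
qed

lemma two_le_card_UNIV: "2 \<le> card (UNIV :: 'a :: {field, finite} set)"
proof -
  have "card {0 :: 'a, 1} \<le> card (UNIV :: 'a set)"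
    by (rule card_mono) auto
  then show ?thesis
    by simp
qed

lemma power_gcd_eq_1:
  fixes x :: "'a :: monoid_mult"
  assumes "x ^ a = 1" and "x ^ b = 1"
  shows "x ^ gcd a b = 1"
proof (cases "a = 0")
  case False
  then obtain s t where "a * s = b * t + gcd a b"
    using bezout_nat by blast
  then have "x ^ (a * s) = x ^ (b * t) * x ^ gcd a b"
    by (simp add: power_add)
  then show ?thesis
    using assms by (simp add: power_mult)
qed (use assms in simp)

lemma exists_root_of_unity_neq_1:
  assumes "1 < d" and "d dvd card (UNIV :: 'a :: {field, finite} set) - 1"
  shows "\<exists>w :: 'a. w ^ d = 1 \<and> w \<noteq> 1"
proof -
  define N where "N = card (UNIV :: 'a set) - 1"
  obtain e where e: "N = d * e"
    using assms(2) unfolding N_def by blast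
  have "N > 0"
    using two_le_card_UNIV[where 'a='a] by (simp add: N_def)
  then have "0 < e" "e < N"
    using e assms(1) by simp_all
  have "\<not> UNIV - {0} \<subseteq> {x :: 'a. x ^ e = x ^ 0}"
  proof
    assume sub: "UNIV - {0} \<subseteq> {x :: 'a. x ^ e = x ^ 0}"
    have "card (UNIV - {0 :: 'a}) \<le> e"
      using card_mono[OF _ sub] card_power_eq_power_le[OF \<open>0 < e\<close>, where 'a='a]
      by (meson finite order_trans)
    then show False
      using \<open>e < N\<close> by (simp add: N_def card_Diff_singleton)
  qed
  then obtain x :: 'a where "x \<noteq> 0" "x ^ e \<noteq> 1"
    by auto
  moreover have "(x ^ e) ^ d = 1"
    using power_card_minus_one_eq_1[OF \<open>x \<noteq> 0\<close>] e
    by (simp add: N_def flip: power_mult) (simp add: mult.commute)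
  ultimately show ?thesis
    by blast
qed

lemma exists_common_root_of_unity_neq_1:
  assumes "n dvd card (UNIV :: 'a :: {field, finite} set) - 1" and "\<not> coprime n M"
  shows "\<exists>w :: 'a. w ^ n = 1 \<and> w ^ M = 1 \<and> w \<noteq> 1"
proof -
  have "card (UNIV :: 'a set) - 1 \<noteq> 0"
    using two_le_card_UNIV[where 'a='a] by simp
  then have "n \<noteq> 0"
    using assms(1) by (metis dvd_0_left_iff)
  then have "1 < gcd n M"
    using assms(2) by (metis coprime_iff_gcd_eq_1 gcd_eq_0_iff less_one nat_neq_iff)
  moreover have "gcd n M dvd card (UNIV :: 'a set) - 1"
    using assms(1) dvd_trans gcd_dvd1 by blast
  ultimately obtain w :: 'a where "w ^ gcd n M = 1" "w \<noteq> 1"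
    using exists_root_of_unity_neq_1 by blast
  moreover have "w ^ n = 1" "w ^ M = 1"
    using calculation(1) by (metis dvd_def gcd_dvd1 gcd_dvd2 power_mult power_one)+
  ultimately show ?thesis
    by blast
qed

lemma CHAR_eq_if_card_eq_prime_power:
  assumes "prime p" and "card (UNIV :: 'a :: {field, finite} set) = p ^ e"
  shows "CHAR('a) = p"
proof -
  have "prime CHAR('a)"
    using finite_imp_CHAR_pos[where 'a='a] by (intro prime_CHAR_semidom) simp_all
  moreover have "CHAR('a) dvd p ^ e"
    using CHAR_dvd_CARD[where 'a='a] assms(2) by simp
  ultimately show ?thesis
    using assms(1) by (metis prime_dvd_power primes_dvd_imp_eq)
qed

lemma neg_one_eq_one_iff_CHAR_dvd_2: "(- 1 :: 'a :: ring_1) = 1 \<longleftrightarrow> CHAR('a) dvd 2"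
proof -
  have "(- 1 :: 'a) = 1 \<longleftrightarrow> of_nat 2 = (0 :: 'a)"
    by (metis add.inverse_unique eq_neg_iff_add_eq_0 of_nat_numeral one_add_one)
  then show ?thesis
    by (simp only: of_nat_eq_0_iff_char_dvd)
qed

section \<open>Characteristic two\<close>

lemma two_eq_0_CHAR_2:
  assumes "CHAR('a :: semiring_1) = 2"
  shows "(2 :: 'a) = 0"
  using assms by (metis of_nat_CHAR of_nat_numeral)

lemma add_power_two_pow_CHAR_2:
  fixes x y :: "'a :: comm_semiring_1"
  assumes "CHAR('a) = 2"
  shows "(x + y) ^ 2 ^ j = x ^ 2 ^ j + y ^ 2 ^ j"
  by (rule freshmans_dream') (simp_all add: assms)

lemma add_eq_0_iff_CHAR_2:
  fixes x y :: "'a :: ring_1"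
  assumes "CHAR('a) = 2"
  shows "x + y = 0 \<longleftrightarrow> x = y"
  by (metis assms minus_CHAR_2 right_minus_eq)

lemma power_two_pow_inj_CHAR_2:
  fixes x y :: "'a :: idom"
  assumes "CHAR('a) = 2" and "x ^ 2 ^ j = y ^ 2 ^ j"
  shows "x = y"
proof -
  have "(x + y) ^ 2 ^ j = x ^ 2 ^ j + y ^ 2 ^ j"
    using assms(1) by (rule add_power_two_pow_CHAR_2)
  also have "\<dots> = 0"
    using assms by (simp only: add_eq_0_iff_CHAR_2)
  finally have "(x + y) ^ 2 ^ j = 0" .
  then show ?thesis
    using assms(1) by (simp add: add_eq_0_iff_CHAR_2)
qed

lemma power_two_pow_mult_fixed:
  fixes x :: "'a :: monoid_mult"
  assumes "x ^ 2 ^ a = x"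
  shows "x ^ 2 ^ (a * t) = x"
proof (induction t)
  case (Suc t)
  have "x ^ 2 ^ (a * Suc t) = (x ^ 2 ^ a) ^ 2 ^ (a * t)"
    by (simp add: power_add power_mult mult.commute)
  then show ?case
    using assms Suc by simp
qed simp

lemma power_two_pow_gcd_fixed_CHAR_2:
  fixes x :: "'a :: idom"
  assumes "CHAR('a) = 2" and "x ^ 2 ^ a = x" and "x ^ 2 ^ b = x"
  shows "x ^ 2 ^ gcd a b = x"
proof (cases "a = 0")
  case False
  then obtain s t where st: "a * s = b * t + gcd a b"
    using bezout_nat by blast
  have "(x ^ 2 ^ gcd a b) ^ 2 ^ (b * t) = x ^ 2 ^ (a * s)"
    by (simp add: st power_add power_mult mult.commute)
  also have "\<dots> = x ^ 2 ^ (b * t)"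
    using assms(2,3) by (simp add: power_two_pow_mult_fixed)
  finally show ?thesis
    using power_two_pow_inj_CHAR_2[OF assms(1)] by blast
qed (use assms in simp)

lemma power_two_pow_double: "(x :: 'a :: monoid_mult) ^ 2 ^ (2 * j) = (x ^ 2 ^ j) ^ 2 ^ j"
  by (simp flip: power_mult power_add mult_2)

lemma power_two_pow_double_fixed_CHAR_2:
  fixes x :: "'a :: idom"
  assumes "CHAR('a) = 2" and "x ^ 2 ^ (2 * j) = x" and "x ^ 2 ^ b = x"
    and "gcd (2 * j) b dvd j"
  shows "x ^ 2 ^ j = x"
  using power_two_pow_gcd_fixed_CHAR_2[OF assms(1-3)] assms(4)
  by (metis dvdE power_two_pow_mult_fixed)

lemma root_of_unity_eq_1_CHAR_2:
  fixes w :: "'a :: field"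
  assumes "CHAR('a) = 2" and "w ^ (2 ^ j + 1) = 1" and "w ^ 2 ^ b = w"
    and "gcd (2 * j) b dvd j"
  shows "w = 1"
proof -
  have "w \<noteq> 0"
    using assms(2) by auto
  then have inv: "w ^ 2 ^ j = inverse w"
    using assms(2) by (simp add: field_simps)
  then have "w ^ 2 ^ (2 * j) = w"
    by (simp add: power_two_pow_double power_inverse)
  then have "w ^ 2 ^ j = w"
    using power_two_pow_double_fixed_CHAR_2 assms by blast
  then have "w ^ 2 ^ 1 = 1 ^ 2 ^ 1"
    using inv \<open>w \<noteq> 0\<close> by (metis power_one right_inverse power2_eq_square power_one_right)
  then show ?thesis
    using power_two_pow_inj_CHAR_2[OF assms(1)] by blast
qed

lemma power_two_pow_add_self_add_1_neq_0_CHAR_2: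
  fixes z :: "'a :: idom"
  assumes "CHAR('a) = 2" and "z ^ 2 ^ b = z" and "gcd (2 * j) b dvd j"
  shows "z ^ 2 ^ j + z + 1 \<noteq> 0"
proof
  assume "z ^ 2 ^ j + z + 1 = 0"
  then have zj: "z ^ 2 ^ j = z + 1"
    using add_eq_0_iff_CHAR_2[OF assms(1)] by (metis add.assoc)
  have "z ^ 2 ^ (2 * j) = z + 1 + 1"
    using zj by (simp add: power_two_pow_double add_power_two_pow_CHAR_2[OF assms(1)])
  then have "z ^ 2 ^ (2 * j) = z"
    using add_eq_0_iff_CHAR_2[OF assms(1), of 1 1] by (simp add: add.assoc)
  then have "z ^ 2 ^ j = z"
    using power_two_pow_double_fixed_CHAR_2 assms by blast
  then show False
    using zj by simp
qed

lemma add_eq_add_swap_CHAR_2: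
  fixes a b c d :: "'a :: ring_1"
  assumes "CHAR('a) = 2" and "a + b = c + d"
  shows "a + c = b + d"
proof -
  have "a + c - (b + d) = (a + b) - (c + d) + (c + c) - (b + b)"
    by (simp add: algebra_simps)
  also have "\<dots> = 0"
    using assms add_eq_0_iff_CHAR_2[OF assms(1), of c c] add_eq_0_iff_CHAR_2[OF assms(1), of b b]
    by simp
  finally show ?thesis
    by simp
qed

text \<open>Writing \<open>U = u ^ Q\<close> etc., the right-hand side is \<open>\<delta> \<epsilon>\<^sup>Q + \<delta>\<^sup>Q \<epsilon> + \<delta>\<^sup>Q \<delta>\<close> for
  \<open>\<delta> = u1 v + u v1\<close> and \<open>\<epsilon> = u1 v1 + u v + u v1\<close>; the left-hand side vanishes as soon as
  \<open>(u, u1)\<close> and \<open>(v, v1)\<close> take equal values under the forms \<open>U u + U1 u1\<close> and \<open>U u + U u1 + U1 u\<close>.\<close>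

lemma forms_identity_CHAR_2:
  fixes u u1 v v1 U U1 V V1 :: "'a :: comm_ring_1"
  assumes "CHAR('a) = 2"
  shows "(U * u + U1 * u1) * (V * v + V * v1 + V1 * v) + (V * v + V1 * v1) * (U * u + U * u1 + U1 * u)
    = (u1 * v + u * v1) * (U1 * V1 + U * V + U * V1) + (U1 * V + U * V1) * (u1 * v1 + u * v + u * v1)
      + (U1 * V + U * V1) * (u1 * v + u * v1)"
proof -
  have "(2 :: 'a) = 0"
    using assms by (rule two_eq_0_CHAR_2)
  moreover have "(U * u + U1 * u1) * (V * v + V * v1 + V1 * v) + (V * v + V1 * v1) * (U * u + U * u1 + U1 * u)
    = (u1 * v + u * v1) * (U1 * V1 + U * V + U * V1) + (U1 * V + U * V1) * (u1 * v1 + u * v + u * v1)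
      + (U1 * V + U * V1) * (u1 * v + u * v1)
      + 2 * (u * v * U * V - u * v1 * U * V1 - u1 * v * U * V1 - u * v1 * U1 * V)"
    by (simp add: algebra_simps)
  ultimately show ?thesis
    by simp
qed

lemma proportional_if_forms_eq_CHAR_2:
  fixes u u1 v v1 :: "'a :: field" and l :: nat
  defines "Q \<equiv> 2 ^ l"
  assumes "CHAR('a) = 2" and no_root: "\<And>z :: 'a. z ^ Q + z + 1 \<noteq> 0"
    and A: "u ^ (Q + 1) + u1 ^ (Q + 1) = v ^ (Q + 1) + v1 ^ (Q + 1)"
    and B: "(u1 + u) ^ (Q + 1) + u1 ^ (Q + 1) = (v1 + v) ^ (Q + 1) + v1 ^ (Q + 1)"
  shows "u1 * v = u * v1"
proof -
  note char = \<open>CHAR('a) = 2\<close>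
  have Q_add: "(x + y) ^ Q = x ^ Q + y ^ Q" for x y :: 'a
    unfolding Q_def using char by (rule add_power_two_pow_CHAR_2)
  have Q_Suc: "x ^ (Q + 1) = x ^ Q * x" for x :: 'a
    by simp
  define U U1 V V1 where "U = u ^ Q" and "U1 = u1 ^ Q" and "V = v ^ Q" and "V1 = v1 ^ Q"
  have A': "U * u + U1 * u1 = V * v + V1 * v1"
    using A by (simp add: U_def U1_def V_def V1_def mult.commute)
  have B': "U * u + U * u1 + U1 * u = V * v + V * v1 + V1 * v"
  proof -
    have "(U * u + U * u1 + U1 * u) + U1 * u1 + U1 * u1 = (V * v + V * v1 + V1 * v) + V1 * v1 + V1 * v1"
      using B by (simp only: Q_Suc Q_add U_def U1_def V_def V1_def) (simp add: algebra_simps)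
    then show ?thesis
      using two_eq_0_CHAR_2[OF char] by (simp add: add.assoc)
  qed
  define \<delta> \<epsilon> where "\<delta> = u1 * v + u * v1" and "\<epsilon> = u1 * v1 + u * v + u * v1"
  have \<delta>Q: "\<delta> ^ Q = U1 * V + U * V1" and \<epsilon>Q: "\<epsilon> ^ Q = U1 * V1 + U * V + U * V1"
    by (simp_all add: \<delta>_def \<epsilon>_def Q_add power_mult_distrib U_def U1_def V_def V1_def)
  have "\<delta> * \<epsilon> ^ Q + \<delta> ^ Q * \<epsilon> + \<delta> ^ Q * \<delta>
      = (U * u + U1 * u1) * (V * v + V * v1 + V1 * v) + (V * v + V1 * v1) * (U * u + U * u1 + U1 * u)"
    unfolding \<delta>Q \<epsilon>Q forms_identity_CHAR_2[OF char] by (simp add: \<delta>_def \<epsilon>_def algebra_simps)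
  also have "\<dots> = 0"
    unfolding A' B' using two_eq_0_CHAR_2[OF char] by (simp add: algebra_simps)
  finally have key: "\<delta> * \<epsilon> ^ Q + \<delta> ^ Q * \<epsilon> + \<delta> ^ Q * \<delta> = 0" .
  have "\<delta> = 0"
  proof (rule ccontr)
    assume "\<delta> \<noteq> 0"
    then have "(\<epsilon> / \<delta>) ^ Q + \<epsilon> / \<delta> + 1 = (\<delta> * \<epsilon> ^ Q + \<delta> ^ Q * \<epsilon> + \<delta> ^ Q * \<delta>) / (\<delta> ^ Q * \<delta>)"
      by (simp add: power_divide field_simps)
    then show False
      using key no_root by simp
  qed
  then show ?thesis
    using add_eq_0_iff_CHAR_2[OF char] by (simp add: \<delta>_def)
qed

section \<open>Powers of two and 2-adic valuations\<close>

lemma power_minus_one_dvd: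
  fixes x :: nat
  assumes "0 < x" and "a dvd b"
  shows "x ^ a - 1 dvd x ^ b - 1"
proof -
  obtain t where "b = a * t"
    using assms(2) by blast
  have "int (x ^ a) - 1 dvd int (x ^ a) ^ t - 1 ^ t"
    using power_diff_sumr2[of "int (x ^ a)" t 1] by simp
  then have "int (x ^ a - 1) dvd int (x ^ b - 1)"
    using assms(1) by (simp add: \<open>b = a * t\<close> of_nat_diff power_mult)
  then show ?thesis
    by (simp only: int_dvd_int_iff)
qed

lemma plus_one_dvd_power_plus_one:
  fixes x :: nat
  assumes "odd n"
  shows "x + 1 dvd x ^ n + 1"
proof -
  have "int x - (- 1) dvd int x ^ n - (- 1) ^ n"
    using power_diff_sumr2[of "int x" n "- 1"] by simp
  then have "int (x + 1) dvd int (x ^ n + 1)"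
    using assms by (simp add: add.commute)
  then show ?thesis
    by (simp only: int_dvd_int_iff)
qed

lemma ord2_of_nat:
  assumes "j \<noteq> 0"
  shows "ord2 (int j) = enat (multiplicity 2 j)"
proof -
  have "multiplicity (2 :: int) (int j) = multiplicity 2 j"
  proof (rule multiplicity_eqI)
    show "(2 :: int) ^ multiplicity 2 j dvd int j"
      by (metis int_dvd_int_iff multiplicity_dvd of_nat_numeral of_nat_power)
    have "\<not> 2 ^ Suc (multiplicity 2 j) dvd j"
      using power_dvd_iff_le_multiplicity[of j "2 :: nat" "Suc (multiplicity 2 j)"] assms by simp
    then show "\<not> (2 :: int) ^ Suc (multiplicity 2 j) dvd int j"
      by (metis int_dvd_int_iff of_nat_numeral of_nat_power)
  qed
  then show ?thesis
    using assms by (simp add: ord2_def)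
qed

lemma ord2_odd_mult:
  assumes "odd a"
  shows "ord2 (int (a * k)) = ord2 (int k)"
proof (cases "k = 0")
  case False
  have "a * k \<noteq> 0"
    using assms False by (auto simp: odd_pos)
  then have "ord2 (int (a * k)) = enat (multiplicity 2 (a * k))"
    by (rule ord2_of_nat)
  also have "multiplicity 2 (a * k) = multiplicity 2 a + multiplicity 2 k"
    using \<open>a * k \<noteq> 0\<close> by (intro prime_elem_multiplicity_mult_distrib) auto
  also have "multiplicity 2 a = 0"
    using assms by (intro not_dvd_imp_multiplicity_0) simp
  finally show ?thesis
    using False by (simp add: ord2_of_nat)
qed simp

lemma gcd_double_dvd_if_ord2_le:
  assumes "0 < k" and "ord2 (int k) \<le> ord2 (int j)"
  shows "gcd (2 * j) k dvd j"
proof (cases "j = 0")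
  case False
  then have le: "multiplicity 2 k \<le> multiplicity 2 j"
    using assms by (simp add: ord2_of_nat)
  show ?thesis
  proof (rule multiplicity_le_imp_dvd)
    show "gcd (2 * j) k \<noteq> 0"
      using assms(1) by simp
    fix p :: nat
    assume "prime p"
    show "multiplicity p (gcd (2 * j) k) \<le> multiplicity p j"
    proof (cases "p = 2")
      case True
      have "multiplicity p (gcd (2 * j) k) \<le> multiplicity p k"
        using assms(1) by (intro dvd_imp_multiplicity_le) auto
      then show ?thesis
        using le True by simp
    next
      case False
      have "multiplicity p (gcd (2 * j) k) \<le> multiplicity p (2 * j)"
        using \<open>j \<noteq> 0\<close> by (intro dvd_imp_multiplicity_le) auto
      also have "\<dots> = multiplicity p 2 + multiplicity p j"
        using \<open>prime p\<close> \<open>j \<noteq> 0\<close> by (intro prime_elem_multiplicity_mult_distrib) auto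
      also have "multiplicity p 2 = 0"
        using \<open>prime p\<close> False by (intro not_dvd_imp_multiplicity_0) (use primes_dvd_imp_eq[of p 2] in auto)
      finally show ?thesis
        by simp
    qed
  qed
qed simp

lemma not_coprime_if_ord2_less:
  assumes "0 < k" and "\<not> ord2 (int k) \<le> ord2 (int j)"
  shows "\<not> coprime (2 ^ k - 1) (2 ^ j + 1 :: nat)"
proof
  assume coprime: "coprime (2 ^ k - 1) (2 ^ j + 1 :: nat)"
  have "j \<noteq> 0"
    using assms(2) by (cases "j = 0") (simp_all add: ord2_def)
  define h :: nat where "h = 2 ^ multiplicity 2 j"
  obtain r where j: "j = h * r" and "odd r"
    using multiplicity_decompose'[of j 2] \<open>j \<noteq> 0\<close> unfolding h_def by auto
  have "multiplicity 2 j < multiplicity 2 k"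
    using assms \<open>j \<noteq> 0\<close> by (simp add: ord2_of_nat)
  then have "2 * h dvd k"
    unfolding h_def by (metis Suc_leI multiplicity_dvd' power_Suc)
  have "2 ^ h + 1 dvd (2 :: nat) ^ j + 1"
    using plus_one_dvd_power_plus_one[OF \<open>odd r\<close>] by (simp add: j power_mult)
  moreover have "2 ^ h + 1 dvd (2 :: nat) ^ k - 1"
  proof -
    have "(2 :: nat) ^ (2 * h) - 1 = (2 ^ h + 1) * (2 ^ h - 1)"
      by (simp add: power_mult_distrib algebra_simps flip: power_add mult_2)
    then have "2 ^ h + 1 dvd (2 :: nat) ^ (2 * h) - 1"
      by (metis dvd_triv_left)
    also have "\<dots> dvd 2 ^ k - 1"
      using power_minus_one_dvd[OF _ \<open>2 * h dvd k\<close>] by simp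
    finally show ?thesis .
  qed
  ultimately have "2 ^ h + 1 = (1 :: nat)"
    using coprime coprime_common_divisor_nat by blast
  then show False
    by simp
qed

lemma two_pow_add_two_pow:
  "(2 :: nat) ^ m + 2 ^ n = 2 ^ min m n * (2 ^ nat \<bar>int m - int n\<bar> + 1)"
  by (cases "m \<le> n") (simp_all add: algebra_simps flip: power_add)

lemma ord2_abs: "ord2 \<bar>x\<bar> = ord2 x"
  by (simp add: ord2_def abs_if multiplicity_uminus_right)

lemma coprime_two_pow_minus_one_split:
  assumes "0 < k"
  shows "coprime (2 ^ k - 1) ((2 ^ l + 1) * (2 ^ m + 2 ^ n) :: nat)
    \<longleftrightarrow> coprime (2 ^ k - 1) (2 ^ l + 1 :: nat) \<and> coprime (2 ^ k - 1) (2 ^ nat \<bar>int m - int n\<bar> + 1 :: nat)"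
proof -
  have "odd ((2 :: nat) ^ k - 1)"
    using assms by (simp add: odd_pos)
  then have "coprime ((2 :: nat) ^ k - 1) (2 ^ min m n)"
    by (simp add: coprime_power_right_iff)
  then show ?thesis
    by (simp only: two_pow_add_two_pow[of m n] coprime_mult_right_iff) blast
qed

lemma two_dvd_gcd_if_odd:
  fixes p :: nat
  assumes "odd p" and "0 < k"
  shows "2 dvd gcd (p ^ k - 1) ((p ^ l + 1) * x)"
proof -
  have "2 dvd p ^ k - 1" and "2 dvd p ^ l + 1"
    using assms by (simp_all add: odd_pos)
  then show ?thesis
    by (blast intro: gcd_greatest dvd_mult2)
qed

section \<open>The cubic extension in characteristic two\<close>

locale char2_cubic_extension =
  fixes k :: nat
  assumes CHAR_2: "CHAR('a :: {field, finite}) = 2"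
    and k_pos: "0 < k"
    and card_UNIV: "card (UNIV :: 'a set) = 2 ^ (3 * k)"
begin

abbreviation q :: nat where "q \<equiv> 2 ^ k"

text \<open>\<open>\<bbbF>\<^sub>q\<close> is represented as the set of solutions of \<open>x ^ q = x\<close>, and \<open>tr\<close> is the
  trace of \<open>'a\<close> over it.\<close>

definition tr :: "'a \<Rightarrow> 'a" where
  "tr x = (x ^ q) ^ q + x ^ q + x"

lemma two_eq_0: "(2 :: 'a) = 0"
  using CHAR_2 by (rule two_eq_0_CHAR_2)

lemma power_card: "(x :: 'a) ^ 2 ^ (3 * k) = x"
  using power_card_eq_self[of x] card_UNIV by simp

lemma power_q_q_q: "(((x :: 'a) ^ q) ^ q) ^ q = x"
proof -
  have "(((x :: 'a) ^ q) ^ q) ^ q = x ^ 2 ^ (k + k + k)"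
    by (simp add: power_add power_mult)
  also have "k + k + k = 3 * k"
    by simp
  finally show ?thesis
    using power_card by simp
qed

lemma add_power_q: "((x :: 'a) + y) ^ q = x ^ q + y ^ q"
  using CHAR_2 by (rule add_power_two_pow_CHAR_2)

lemma power_q_commute: "((x :: 'a) ^ n) ^ q = (x ^ q) ^ n"
  by (metis power_mult mult.commute)

lemma tr_power_q: "tr x ^ q = tr x"
  by (simp add: tr_def add_power_q power_q_q_q add_ac)

lemma tr_add: "tr (x + y) = tr x + tr y"
  by (simp add: tr_def add_power_q add_ac)

lemma tr_mult_Fq: "a ^ q = a \<Longrightarrow> tr (a * x) = a * tr x"
  by (simp add: tr_def power_mult_distrib distrib_left)

lemma tr_Fq: "a ^ q = a \<Longrightarrow> tr a = a"
  using two_eq_0 by (simp add: tr_def)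

lemma tr_power_two_pow: "tr (x ^ 2 ^ j) = tr x ^ 2 ^ j"
  by (simp add: tr_def add_power_two_pow_CHAR_2[OF CHAR_2] power_q_commute[of "x ^ q" "2 ^ j"]
      power_q_commute[of x "2 ^ j"])

lemma tr_power_q_add_self: "tr (x ^ q + x) = 0"
  using two_eq_0 by (simp add: tr_def add_power_q power_q_q_q algebra_simps)

lemma one_less_q: "1 < q"
  using k_pos one_less_power[of "2 :: nat" k] by simp

lemma exists_not_Fq: "\<exists>x :: 'a. x ^ q \<noteq> x"
proof -
  have "card {x :: 'a. x ^ q = x ^ 1} \<le> q"
    using one_less_q by (intro card_power_eq_power_le) simp
  also have "q < card (UNIV :: 'a set)"
    using k_pos by (simp add: card_UNIV)
  finally have "{x :: 'a. x ^ q = x ^ 1} \<noteq> UNIV"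
    by auto
  then show ?thesis
    by auto
qed

lemma Fq_iff_power_q_minus_1:
  assumes "w \<noteq> 0"
  shows "w ^ q = w \<longleftrightarrow> w ^ (q - 1) = (1 :: 'a)"
proof -
  have "w ^ q = w ^ (q - 1) * w"
    using power_minus_mult[of q w] by simp
  then show ?thesis
    using assms by simp
qed

lemma Fq_root_eq_1_if_coprime:
  assumes "coprime (q - 1) M" and "0 < M" and "w ^ q = w" and "w ^ M = (1 :: 'a)"
  shows "w = 1"
proof -
  have "w \<noteq> 0"
    using assms(2,4) by (auto simp: zero_power)
  then have "w ^ gcd (q - 1) M = 1"
    using assms(3,4) by (intro power_gcd_eq_1) (simp_all add: Fq_iff_power_q_minus_1)
  then show ?thesis
    using assms(1) by simp
qed

lemma exists_Fq_root_if_not_coprime: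
  assumes "\<not> coprime (q - 1) M"
  shows "\<exists>w :: 'a. w ^ q = w \<and> w ^ M = 1 \<and> w \<noteq> 1"
proof -
  have "q - 1 dvd card (UNIV :: 'a set) - 1"
    unfolding card_UNIV by (rule power_minus_one_dvd) simp_all
  then obtain w :: 'a where "w ^ (q - 1) = 1" "w ^ M = 1" "w \<noteq> 1"
    using exists_common_root_of_unity_neq_1 assms by blast
  moreover have "w \<noteq> 0"
    using calculation(1) one_less_q by (auto simp: zero_power)
  ultimately show ?thesis
    using Fq_iff_power_q_minus_1 by blast
qed

lemma Fq_root_eq_1_if_ord2_le:
  assumes "ord2 (int k) \<le> ord2 (int j)" and "w ^ q = w" and "w ^ (2 ^ j + 1) = (1 :: 'a)"
  shows "w = 1"
  using root_of_unity_eq_1_CHAR_2[OF CHAR_2 assms(3,2)] gcd_double_dvd_if_ord2_le[OF k_pos assms(1)]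
  by blast

lemma gcd_double_dvd_3k:
  assumes "ord2 (int k) \<le> ord2 (int l)"
  shows "gcd (2 * l) (3 * k) dvd l"
proof (rule gcd_double_dvd_if_ord2_le)
  show "0 < 3 * k"
    using k_pos by simp
  show "ord2 (int (3 * k)) \<le> ord2 (int l)"
    using assms ord2_odd_mult[of 3 k] by simp
qed

lemma power_two_pow_plus_one_inj:
  assumes "ord2 (int k) \<le> ord2 (int l)" and "x ^ (2 ^ l + 1) = y ^ (2 ^ l + 1)"
  shows "x = (y :: 'a)"
proof (cases "y = 0")
  case False
  have "(x / y) ^ (2 ^ l + 1) = 1"
    using assms(2) False by (simp add: power_divide)
  then have "x / y = 1"
    using root_of_unity_eq_1_CHAR_2[OF CHAR_2 _ power_card gcd_double_dvd_3k[OF assms(1)]] by blast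
  then show ?thesis
    using False by simp
qed (use assms(2) in simp)

lemma power_two_pow_add_self_add_1_neq_0:
  assumes "ord2 (int k) \<le> ord2 (int l)"
  shows "(z :: 'a) ^ 2 ^ l + z + 1 \<noteq> 0"
  using power_two_pow_add_self_add_1_neq_0_CHAR_2[OF CHAR_2 power_card gcd_double_dvd_3k[OF assms]] .

lemma tr_eq_0_imp_power_q_add: "tr u = 0 \<Longrightarrow> (u ^ q) ^ q = u ^ q + u"
  using add_eq_0_iff_CHAR_2[OF CHAR_2] by (simp add: tr_def add.assoc)

lemma eq_0_if_tr_eq_0_and_power_eq:
  assumes "ord2 (int k) \<le> ord2 (int l)" and "tr x = 0"
    and "x ^ (2 ^ l + 1) = (x ^ q) ^ (2 ^ l + 1)"
  shows "x = 0"
proof -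
  have "x ^ q = x"
    using power_two_pow_plus_one_inj[OF assms(1,3)] by simp
  then show ?thesis
    using assms(2) tr_Fq by simp
qed

lemma forms_eq_if_tr_eq_0_and_sum_Fq:
  fixes u v :: 'a and P :: nat
  assumes "tr u = 0" and "tr v = 0" and Fq: "(u ^ P + v ^ P) ^ q = u ^ P + v ^ P"
  shows "u ^ P + (u ^ q) ^ P = v ^ P + (v ^ q) ^ P"
    and "(u ^ q + u) ^ P + (u ^ q) ^ P = (v ^ q + v) ^ P + (v ^ q) ^ P"
proof -
  define u1 v1 where "u1 = u ^ q" and "v1 = v ^ q"
  have u1q: "u1 ^ q = u1 + u" and v1q: "v1 ^ q = v1 + v"
    using assms(1,2) by (simp_all add: u1_def v1_def tr_eq_0_imp_power_q_add)
  have power_q: "(x ^ P + y ^ P) ^ q = (x ^ q) ^ P + (y ^ q) ^ P" for x y :: 'a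
    by (simp only: add_power_q power_q_commute[of _ P])
  have E0: "u1 ^ P + v1 ^ P = u ^ P + v ^ P"
    using Fq by (simp only: power_q u1_def v1_def)
  have "(u1 + u) ^ P + (v1 + v) ^ P = (u1 ^ P + v1 ^ P) ^ q"
    by (simp only: power_q u1q v1q)
  also have "\<dots> = u1 ^ P + v1 ^ P"
    using Fq by (simp only: E0)
  finally have E1: "(u1 + u) ^ P + (v1 + v) ^ P = u1 ^ P + v1 ^ P" .
  show "u ^ P + (u ^ q) ^ P = v ^ P + (v ^ q) ^ P"
    using add_eq_add_swap_CHAR_2[OF CHAR_2 E0] by (simp add: u1_def v1_def add.commute)
  show "(u ^ q + u) ^ P + (u ^ q) ^ P = (v ^ q + v) ^ P + (v ^ q) ^ P"
    using add_eq_add_swap_CHAR_2[OF CHAR_2 E1] by (simp only: u1_def v1_def)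
qed

lemma eq_if_tr_eq_0_and_sum_Fq:
  fixes u v :: 'a and l :: nat
  defines "Q \<equiv> 2 ^ l"
  assumes l: "ord2 (int k) \<le> ord2 (int l)" and "tr u = 0" and "tr v = 0"
    and Fq: "(u ^ (Q + 1) + v ^ (Q + 1)) ^ q = u ^ (Q + 1) + v ^ (Q + 1)"
  shows "u = v"
proof -
  define u1 v1 where "u1 = u ^ q" and "v1 = v ^ q"
  have A: "u ^ (Q + 1) + u1 ^ (Q + 1) = v ^ (Q + 1) + v1 ^ (Q + 1)"
    and B: "(u1 + u) ^ (Q + 1) + u1 ^ (Q + 1) = (v1 + v) ^ (Q + 1) + v1 ^ (Q + 1)"
    unfolding u1_def v1_def using forms_eq_if_tr_eq_0_and_sum_Fq[OF assms(3,4) Fq] by blast+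
  have proportional: "u1 * v = u * v1"
    using proportional_if_forms_eq_CHAR_2[OF CHAR_2 _ A[unfolded Q_def] B[unfolded Q_def]]
      power_two_pow_add_self_add_1_neq_0[OF l] by blast
  have nonzero: "x ^ (Q + 1) + (x ^ q) ^ (Q + 1) \<noteq> 0" if "tr x = 0" "x \<noteq> 0" for x
    using eq_0_if_tr_eq_0_and_power_eq[OF l that(1)] that(2) add_eq_0_iff_CHAR_2[OF CHAR_2]
    unfolding Q_def by blast
  show ?thesis
  proof (cases "v = 0")
    case True
    then show ?thesis
      using A nonzero[OF assms(3)] by (auto simp: u1_def v1_def zero_power)
  next
    case False
    define w where "w = u / v"
    have u: "u = w * v" and u1: "u1 = w * v1"
      using False proportional by (simp_all add: w_def field_simps)
    have "w ^ (Q + 1) * (v ^ (Q + 1) + v1 ^ (Q + 1)) = 1 * (v ^ (Q + 1) + v1 ^ (Q + 1))"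
      using A by (simp add: u u1 power_mult_distrib distrib_left mult_ac)
    then have "w ^ (Q + 1) = 1 ^ (Q + 1)"
      using nonzero[OF assms(4) False] by (simp add: v1_def)
    then have "w = 1"
      using power_two_pow_plus_one_inj[OF l] unfolding Q_def by blast
    then show ?thesis
      using u by simp
  qed
qed

lemma tr_power_add_Fq:
  assumes "a ^ q = a"
  shows "tr ((x + a) ^ (2 ^ m + 2 ^ n))
    = tr (x ^ (2 ^ m + 2 ^ n)) + (a + tr x) ^ (2 ^ m + 2 ^ n) + tr x ^ (2 ^ m + 2 ^ n)"
proof -
  have Fq: "(a ^ i) ^ q = a ^ i" for i
    using assms by (simp add: power_q_commute)
  have expand: "(y + z) ^ (2 ^ m + 2 ^ n)
      = y ^ (2 ^ m + 2 ^ n) + z ^ 2 ^ m * y ^ 2 ^ n + z ^ 2 ^ n * y ^ 2 ^ m + z ^ 2 ^ m * z ^ 2 ^ n"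
    for y z :: 'a
    by (simp add: power_add add_power_two_pow_CHAR_2[OF CHAR_2] algebra_simps)
  have "tr ((x + a) ^ (2 ^ m + 2 ^ n)) = tr (x ^ (2 ^ m + 2 ^ n))
      + a ^ 2 ^ m * tr x ^ 2 ^ n + a ^ 2 ^ n * tr x ^ 2 ^ m + a ^ 2 ^ m * a ^ 2 ^ n"
    by (simp add: expand tr_add tr_mult_Fq Fq tr_Fq tr_power_two_pow power_mult_distrib)
  also have "\<dots> = tr (x ^ (2 ^ m + 2 ^ n)) + (a + tr x) ^ (2 ^ m + 2 ^ n) + tr x ^ (2 ^ m + 2 ^ n)"
    using expand[of a "tr x"] two_eq_0 by (simp add: power_add algebra_simps)
  finally show ?thesis .
qed

lemma Fq_power_inj:
  fixes a b :: 'a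
  assumes roots: "\<And>w :: 'a. w ^ q = w \<Longrightarrow> w ^ (2 ^ d + 1) = 1 \<Longrightarrow> w = 1"
    and "a ^ q = a" and "b ^ q = b" and "a ^ (2 ^ e * (2 ^ d + 1)) = b ^ (2 ^ e * (2 ^ d + 1))"
  shows "a = b"
proof -
  have pow: "(y ^ (2 ^ d + 1)) ^ 2 ^ e = y ^ (2 ^ e * (2 ^ d + 1))" for y :: 'a
    by (simp only: mult.commute[of "2 ^ e"] power_mult)
  have "(a ^ (2 ^ d + 1)) ^ 2 ^ e = (b ^ (2 ^ d + 1)) ^ 2 ^ e"
    using assms(4) by (simp only: pow)
  then have ab: "a ^ (2 ^ d + 1) = b ^ (2 ^ d + 1)"
    by (rule power_two_pow_inj_CHAR_2[OF CHAR_2])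
  show ?thesis
  proof (cases "b = 0")
    case False
    have "(a / b) ^ q = a / b" and "(a / b) ^ (2 ^ d + 1) = 1"
      using assms(2,3) ab False by (simp_all add: power_divide)
    then show ?thesis
      using roots False by fastforce
  qed (use ab in simp)
qed

lemma inj_on_tr_power_add_Fq:
  fixes y :: 'a
  assumes roots: "\<And>w :: 'a. w ^ q = w \<Longrightarrow> w ^ (2 ^ d + 1) = 1 \<Longrightarrow> w = 1"
    and mn: "(2 :: nat) ^ m + 2 ^ n = 2 ^ e * (2 ^ d + 1)"
  shows "inj_on (\<lambda>a. tr ((y + a) ^ (2 ^ m + 2 ^ n))) {a. a ^ q = a}"
proof (rule inj_onI)
  fix a b
  assume "a \<in> {a. a ^ q = a}" "b \<in> {a. a ^ q = a}"
    and eq: "tr ((y + a) ^ (2 ^ m + 2 ^ n)) = tr ((y + b) ^ (2 ^ m + 2 ^ n))"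
  then have "a ^ q = a" "b ^ q = b"
    by simp_all
  have "(a + tr y) ^ (2 ^ m + 2 ^ n) = (b + tr y) ^ (2 ^ m + 2 ^ n)"
    using eq by (simp only: tr_power_add_Fq[OF \<open>a ^ q = a\<close>] tr_power_add_Fq[OF \<open>b ^ q = b\<close>]) simp
  moreover have "(a + tr y) ^ q = a + tr y" "(b + tr y) ^ q = b + tr y"
    using \<open>a ^ q = a\<close> \<open>b ^ q = b\<close> by (simp_all add: add_power_q tr_power_q)
  ultimately have "a + tr y = b + tr y"
    using Fq_power_inj[OF roots] unfolding mn by blast
  then show "a = b"
    by simp
qed

lemma exists_Fq_tr_power_add_eq:
  fixes y b :: 'a
  assumes roots: "\<And>w :: 'a. w ^ q = w \<Longrightarrow> w ^ (2 ^ d + 1) = 1 \<Longrightarrow> w = 1"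
    and mn: "(2 :: nat) ^ m + 2 ^ n = 2 ^ e * (2 ^ d + 1)" and "b ^ q = b"
  shows "\<exists>a. a ^ q = a \<and> tr ((y + a) ^ (2 ^ m + 2 ^ n)) = b"
proof -
  have "(\<lambda>a. tr ((y + a) ^ (2 ^ m + 2 ^ n))) ` {a. a ^ q = a} \<subseteq> {a. a ^ q = a}"
    by (auto simp: tr_power_q)
  then have "(\<lambda>a. tr ((y + a) ^ (2 ^ m + 2 ^ n))) ` {a. a ^ q = a} = {a. a ^ q = a}"
    using inj_on_tr_power_add_Fq[OF roots mn] by (intro endo_inj_surj) auto
  then have "b \<in> (\<lambda>a. tr ((y + a) ^ (2 ^ m + 2 ^ n))) ` {a. a ^ q = a}"
    using assms(3) by simp
  then show ?thesis
    by auto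
qed

lemma Fq_if_eq_mult_add_Fq:
  assumes "x = w * x + a" and "w ^ q = w" and "w \<noteq> 1" and "a ^ q = (a :: 'a)"
  shows "x ^ q = x"
proof -
  have "a = x - w * x"
    using assms(1) by (simp add: algebra_simps)
  then have "a = (1 + w) * x"
    by (simp add: minus_CHAR_2[OF CHAR_2] algebra_simps)
  moreover have "1 + w \<noteq> 0"
    using assms(3) add_eq_0_iff_CHAR_2[OF CHAR_2, of 1 w] by auto
  ultimately have "x = a / (1 + w)"
    by simp
  moreover have "(1 + w) ^ q = 1 + w"
    using assms(2) by (simp add: add_power_q)
  ultimately show ?thesis
    using assms(4) by (simp add: power_divide)
qed

end

section \<open>The permutation criterion\<close>

locale f_poly_char2 = char2_cubic_extension k for k +
  fixes c :: "'a :: {field, finite}"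
  assumes c_nonzero: "c \<noteq> 0" and c_Fq: "c ^ 2 ^ k = c"
begin

abbreviation f :: "nat \<Rightarrow> nat \<Rightarrow> nat \<Rightarrow> 'a \<Rightarrow> 'a" where
  "f l m n \<equiv> poly (f_poly q (2 ^ l) (2 ^ m) (2 ^ n) c)"

lemma f_eq: "f l m n x = (x ^ q + x) ^ (2 ^ l + 1) + c * tr (x ^ (2 ^ m + 2 ^ n))"
proof -
  define E :: nat where "E = 2 ^ m + 2 ^ n"
  have "q\<^sup>2 * E = E * q * q" and "q * E = E * q"
    by (simp_all add: power2_eq_square)
  then have "x ^ (q\<^sup>2 * E) = ((x ^ E) ^ q) ^ q" and "x ^ (q * E) = (x ^ E) ^ q"
    by (simp_all only: power_mult)
  then show ?thesis
    by (simp add: f_poly_def poly_monom E_def[symmetric] tr_def minus_CHAR_2[OF CHAR_2] algebra_simps)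
qed

lemma f_Fq: "a ^ q = a \<Longrightarrow> f l m n a = c * a ^ (2 ^ m + 2 ^ n)"
  using two_eq_0 by (simp add: f_eq tr_Fq power_q_commute zero_power)

lemma inj_f:
  assumes l: "ord2 (int k) \<le> ord2 (int l)"
    and roots: "\<And>w :: 'a. w ^ q = w \<Longrightarrow> w ^ (2 ^ d + 1) = 1 \<Longrightarrow> w = 1"
    and mn: "(2 :: nat) ^ m + 2 ^ n = 2 ^ e * (2 ^ d + 1)"
  shows "inj (f l m n)"
proof (rule injI)
  fix x y :: 'a
  assume fxy: "f l m n x = f l m n y"
  define u v where "u = x ^ q + x" and "v = y ^ q + y"
  define A B where "A = c * tr (x ^ (2 ^ m + 2 ^ n))" and "B = c * tr (y ^ (2 ^ m + 2 ^ n))"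
  have "u ^ (2 ^ l + 1) + A = v ^ (2 ^ l + 1) + B"
    using fxy by (simp add: f_eq u_def v_def A_def B_def)
  then have sum: "u ^ (2 ^ l + 1) + v ^ (2 ^ l + 1) = A + B"
    by (rule add_eq_add_swap_CHAR_2[OF CHAR_2])
  have "(A + B) ^ q = A + B"
    using c_Fq by (simp add: A_def B_def add_power_q power_mult_distrib tr_power_q)
  then have "u = v"
    using eq_if_tr_eq_0_and_sum_Fq[OF l] tr_power_q_add_self sum by (simp add: u_def v_def)
  then have "A = B"
    using \<open>u ^ (2 ^ l + 1) + A = v ^ (2 ^ l + 1) + B\<close> by simp
  define a where "a = x + y"
  have "x ^ q + y ^ q = x + y"
    using \<open>u = v\<close> unfolding u_def v_def by (rule add_eq_add_swap_CHAR_2[OF CHAR_2])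
  then have "a ^ q = a"
    by (simp add: a_def add_power_q)
  have y: "y = x + a"
    using two_eq_0 by (simp add: a_def flip: mult_2)
  have "tr ((x + a) ^ (2 ^ m + 2 ^ n)) = tr ((x + 0) ^ (2 ^ m + 2 ^ n))"
    using \<open>A = B\<close> c_nonzero by (simp add: A_def B_def flip: y)
  then have "a = 0"
    using inj_onD[OF inj_on_tr_power_add_Fq[OF roots mn, of x], of a 0] \<open>a ^ q = a\<close> by simp
  then show "x = y"
    using y by simp
qed

lemma not_inj_f_if_root_d:
  fixes w :: 'a
  assumes "w ^ q = w" and "w \<noteq> 1" and "w ^ (2 ^ d + 1) = 1"
    and mn: "(2 :: nat) ^ m + 2 ^ n = 2 ^ e * (2 ^ d + 1)"
  shows "\<not> inj (f l m n)"
proof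
  assume "inj (f l m n)"
  have "w ^ (2 ^ m + 2 ^ n) = (w ^ (2 ^ d + 1)) ^ 2 ^ e"
    by (simp only: mn mult.commute[of "2 ^ e"] power_mult)
  then have "w ^ (2 ^ m + 2 ^ n) = 1"
    using assms(3) by simp
  then have "f l m n w = f l m n 1"
    using f_Fq[OF assms(1)] f_Fq[of 1] by simp
  then show False
    using injD[OF \<open>inj (f l m n)\<close>] assms(2) by blast
qed

text \<open>Multiplying by \<open>w\<close> preserves \<open>(x ^ q + x) ^ (2 ^ l + 1)\<close>; a translation by an element of
  \<open>\<bbbF>\<^sub>q\<close> then repairs the trace term, since \<open>a \<mapsto> tr ((y + a) ^ (2 ^ m + 2 ^ n))\<close> is injective,
  hence onto, on \<open>\<bbbF>\<^sub>q\<close>.\<close>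

lemma not_inj_f_if_root_l:
  fixes w :: 'a
  assumes w: "w ^ q = w" "w \<noteq> 1" "w ^ (2 ^ l + 1) = 1"
    and roots: "\<And>w :: 'a. w ^ q = w \<Longrightarrow> w ^ (2 ^ d + 1) = 1 \<Longrightarrow> w = 1"
    and mn: "(2 :: nat) ^ m + 2 ^ n = 2 ^ e * (2 ^ d + 1)"
  shows "\<not> inj (f l m n)"
proof
  assume inj: "inj (f l m n)"
  obtain x :: 'a where x: "x ^ q \<noteq> x"
    using exists_not_Fq by blast
  define y where "y = w * x"
  have y_q: "y ^ q + y = w * (x ^ q + x)"
    using w(1) by (simp add: y_def power_mult_distrib distrib_left)
  obtain a where "a ^ q = a" and a: "tr ((y + a) ^ (2 ^ m + 2 ^ n)) = tr (x ^ (2 ^ m + 2 ^ n))"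
    using exists_Fq_tr_power_add_eq[OF roots mn tr_power_q] by blast
  have "(y + a) ^ q + (y + a) = y ^ q + y"
    using \<open>a ^ q = a\<close> two_eq_0 by (simp add: add_power_q algebra_simps flip: mult_2)
  then have "f l m n (y + a) = f l m n x"
    using a w(3) by (simp add: f_eq y_q power_mult_distrib)
  then have "x = w * x + a"
    using injD[OF inj] by (simp add: y_def)
  then have "x ^ q = x"
    using Fq_if_eq_mult_add_Fq w(1,2) \<open>a ^ q = a\<close> by blast
  then show False
    using x by simp
qed

lemma bij_f_iff:
  assumes mn: "(2 :: nat) ^ m + 2 ^ n = 2 ^ e * (2 ^ d + 1)"
  shows "bij (f l m n) \<longleftrightarrow> coprime (q - 1) (2 ^ l + 1) \<and> coprime (q - 1) (2 ^ d + 1)"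
    and "bij (f l m n) \<longleftrightarrow> ord2 (int k) \<le> ord2 (int l) \<and> ord2 (int k) \<le> ord2 (int d)"
proof -
  have bij_iff_inj: "bij (f l m n) \<longleftrightarrow> inj (f l m n)"
    using finite_UNIV_inj_surj[of "f l m n"] by (auto simp: bij_def)
  have ord2_imp_inj: "inj (f l m n)"
    if "ord2 (int k) \<le> ord2 (int l)" "ord2 (int k) \<le> ord2 (int d)"
    using inj_f[OF that(1) Fq_root_eq_1_if_ord2_le[OF that(2)] mn] by blast
  have inj_imp_coprime: "coprime (q - 1) (2 ^ l + 1) \<and> coprime (q - 1) (2 ^ d + 1)"
    if inj: "inj (f l m n)"
  proof
    show d: "coprime (q - 1) (2 ^ d + 1)"
    proof (rule ccontr)
      assume "\<not> coprime (q - 1) (2 ^ d + 1)"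
      then obtain w :: 'a where "w ^ q = w" "w ^ (2 ^ d + 1) = 1" "w \<noteq> 1"
        using exists_Fq_root_if_not_coprime by blast
      then show False
        using not_inj_f_if_root_d[OF _ _ _ mn] inj by blast
    qed
    show "coprime (q - 1) (2 ^ l + 1)"
    proof (rule ccontr)
      assume "\<not> coprime (q - 1) (2 ^ l + 1)"
      then obtain w :: 'a where "w ^ q = w" "w ^ (2 ^ l + 1) = 1" "w \<noteq> 1"
        using exists_Fq_root_if_not_coprime by blast
      moreover have "\<And>w :: 'a. w ^ q = w \<Longrightarrow> w ^ (2 ^ d + 1) = 1 \<Longrightarrow> w = 1"
        using Fq_root_eq_1_if_coprime[OF d] by simp
      ultimately show False
        using not_inj_f_if_root_l[OF _ _ _ _ mn] inj by blast
    qed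
  qed
  have coprime_imp_ord2: "ord2 (int k) \<le> ord2 (int j)" if "coprime (q - 1) (2 ^ j + 1)" for j
    using not_coprime_if_ord2_less[OF k_pos] that by blast
  show "bij (f l m n) \<longleftrightarrow> coprime (q - 1) (2 ^ l + 1) \<and> coprime (q - 1) (2 ^ d + 1)"
    and "bij (f l m n) \<longleftrightarrow> ord2 (int k) \<le> ord2 (int l) \<and> ord2 (int k) \<le> ord2 (int d)"
    using bij_iff_inj ord2_imp_inj inj_imp_coprime coprime_imp_ord2[of l] coprime_imp_ord2[of d]
    by blast+
qed

lemma bij_f_iff_gcd_and_ord2:
  "(bij (f l m n) \<longleftrightarrow> gcd (2 ^ k - 1) ((2 ^ l + 1) * (2 ^ m + 2 ^ n) :: nat) = 1)
    \<and> (bij (f l m n) \<longleftrightarrow> ord2 (int k) \<le> min (ord2 (int l)) (ord2 (int m - int n)))"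
proof -
  have "ord2 (int m - int n) = ord2 (int (nat \<bar>int m - int n\<bar>))"
    by (simp add: ord2_abs)
  then show ?thesis
    using bij_f_iff[OF two_pow_add_two_pow[of m n], of l]
      coprime_two_pow_minus_one_split[OF k_pos, of l m n]
    unfolding min.bounded_iff coprime_iff_gcd_eq_1 by presburger
qed

end

lemma poly_f_poly_neg_one:
  fixes c :: "'a :: comm_ring_1"
  assumes "odd q" and "even (R + S)"
  shows "poly (f_poly q Q R S c) (- 1) = poly (f_poly q Q R S c) 1"
  using assms by (simp add: f_poly_def poly_monom)

lemma not_bij_f_poly_if_odd:
  fixes c :: "'a :: comm_ring_1"
  assumes "(- 1 :: 'a) \<noteq> 1" and "odd q" and "even (R + S)"
  shows "\<not> bij (poly (f_poly q Q R S c))"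
proof
  assume "bij (poly (f_poly q Q R S c))"
  then have "- 1 = (1 :: 'a)"
    using poly_f_poly_neg_one[OF assms(2,3)] by (blast dest: bij_is_inj injD)
  then show False
    using assms(1) by contradiction
qed

theorem theorem1p1:
  fixes p k l m n :: nat and c :: "'a::{field,finite}"
  assumes "prime p" and "k > 0"
    and "card (UNIV :: 'a set) = (p ^ k) ^ 3"
    and "c \<noteq> 0" and "c ^ (p ^ k) = c"
  shows "(bij (poly (f_poly (p^k) (p^l) (p^m) (p^n) c))
            \<longleftrightarrow> gcd (p^k - 1) ((p^l + 1) * (p^m + p^n)) = 1)
       \<and> (bij (poly (f_poly (p^k) (p^l) (p^m) (p^n) c))
            \<longleftrightarrow> (p = 2 \<and> ord2 (int k) \<le> min (ord2 (int l)) (ord2 (int m - int n))))"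
proof -
  have card: "card (UNIV :: 'a set) = p ^ (3 * k)"
    using assms(3) by (simp only: power_mult mult.commute[of 3 k])
  have char: "CHAR('a) = p"
    using CHAR_eq_if_card_eq_prime_power[OF assms(1) card] .
  show ?thesis
  proof (cases "p = 2")
    case True
    interpret f_poly_char2 k c
      using char card assms True by unfold_locales simp_all
    show ?thesis
      using bij_f_iff_gcd_and_ord2[of l m n] True by metis
  next
    case False
    then have "odd p"
      using prime_ge_2_nat[OF assms(1)] by (intro prime_odd_nat[OF assms(1)]) simp
    have "(- 1 :: 'a) \<noteq> 1"
      using char False assms(1) primes_dvd_imp_eq[of p 2] by (auto simp: neg_one_eq_one_iff_CHAR_dvd_2)
    then have "\<not> bij (poly (f_poly (p^k) (p^l) (p^m) (p^n) c))"
      using \<open>odd p\<close> by (intro not_bij_f_poly_if_odd) simp_all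
    moreover have "gcd (p^k - 1) ((p^l + 1) * (p^m + p^n)) \<noteq> 1"
      using two_dvd_gcd_if_odd[OF \<open>odd p\<close> assms(2), of l "p^m + p^n"]
      by (metis nat_dvd_1_iff_1 numeral_eq_one_iff semiring_norm(85))
    ultimately show ?thesis
      using False by blast
  qed
qed

end
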